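(* The hypersurface Dirac operator $D_{B} (s) = -\frac{1}{2}\sum_{i,j=1}^4 [\gamma_{\theta}^{j},\gamma_{\theta}^{i}]_\theta^{}\, \partial^\theta_i s \star_\theta z_j - \frac{3}{2}\, s$ on $\mathbb{S}^3_\theta$ coincides with the Connes–Landi Dirac operator $D_{\mathrm{CL}}(s) = -\frac{1}{2}\sum_{i,j=1}^4 [\gamma^{j},\gamma^{i}]\, \partial_i s \, z_j - \frac{3}{2}\, s$.
   Context: Let $H=\mathcal{O}(\mathbb{T}^2)$ with basis $t_{(n_1,n_2)}$, and consider its left coaction on the commutative algebra of $\mathbb{R}^4$ given by $\rho(z^1)=t_{(2,0)}\otimes z^1$, $\rho(z^2)=t_{(0,2)}\otimes z^2$, $\rho(z^3)=t_{(-2,0)}\otimes z^3$, $\rho(z^4)=t_{(0,-2)}\otimes z^4$ (complex coordinates, $z^3=\overline{z^1}$, $z^4=\overline{z^2}$), and on spinors $\mathcal{E}=A^4$ by $\rho(e_1)=t_{(1,1)}\otimes e_1$, $\rho(e_2)=t_{(-1,-1)}\otimes e_2$, $\rho(e_3)=t_{(1,-1)}\otimes e_3$, $\rho(e_4)=t_{(-1,1)}\otimes e_4$. With the 2-cocycle $\sigma_\theta(t_{(n_1,n_2)}\otimes t_{(m_1,m_2)}) = \exp(\tfrac{i\theta}{4}(n_1m_2-n_2m_1))$ one defines $a\star_\theta a' = \sigma_\theta(a_{(-1)}\otimes a'_{(-1)})\,a_{(0)}a'_{(0)}$ and $a\star_\theta s$ similarly; this yields the algebra $B$ of the Connes–Landi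 sphere $\mathbb{S}^3_\theta$ (quotient of $\mathbb{R}^4_\theta$ by $f=\tfrac12(\sum g_{ij}z^iz^j-1)$, with $(g_{ij})=\tfrac12$ times the matrix with rows $(0,0,1,0),(0,0,0,1),(1,0,0,0),(0,1,0,0)$) and its spinor module $\mathcal{E}_B=\mathcal{E}/f\mathcal{E}$. Here $z_j=\sum_k g_{jk}z^k$, $\gamma^i_\theta$ are the $\theta$-deformed gamma matrices, $\gamma^i$ their undeformed versions ($\theta=0$), $[\gamma^j_\theta,\gamma^i_\theta]_\theta=\gamma^j_\theta\gamma^i_\theta-R^{ij}\gamma^i_\theta\gamma^j_\theta$ with $R$ the commutation-relation matrix of $\mathbb{R}^4_\theta$, $\partial^\theta_i$ is defined by $\mathrm{d} a=\partial^\theta_i a\star_\theta\mathrm{d} z^i$ and $\partial_i$ by $\mathrm{d} a = \partial_i a\,\mathrm{d} z^i$ with the undeformed module structure. $D_B$ is the Dirac operator $\gamma_B\circ\nabla^{\mathrm{sp}}_B$ induced on $\mathbb{S}^3_\theta$ from the flat spinorial structure on $\mathbb{R}^4_\theta$ (expressed in terms of star-products), and $D_{\mathrm{CL}}$ is the classical Dirac operator on $\mathbb{S}^3$ regarded as an operator on the deformed spinor module. Both satisfy $D(a\star_\theta s) = a\star_\theta D(s)+\gamma_{\mathbb{S}^3}(\mathrm{d} a\otimes_{B}s)$ with the deformed tensor product and classical Clifford multiplication $\gamma_{\mathbb{S}^3}$. *)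

theory Defs
  imports Complex_Main "HOL-Library.Poly_Mapping" "HOL-Library.Product_Plus"
begin

text \<open>Spinors in E = A^4 are given by their four coefficient polynomials
 s k (k = 1..4) with respect to the basis e_1,...,e_4 in the UNDEFORMED
 module structure, s = sum_k (s k) e_k.\<close>

type_synonym mon = "nat \<Rightarrow>\<^sub>0 nat"
type_synonym poly = "mon \<Rightarrow> complex"
type_synonym spinor = "nat \<Rightarrow> poly"
type_synonym cmat = "nat \<Rightarrow> nat \<Rightarrow> complex"

definition is_poly :: "poly \<Rightarrow> bool" where
  "is_poly a \<longleftrightarrow> finite {m. a m \<noteq> 0} \<and> (\<forall>m. a m \<noteq> 0 \<longrightarrow> Poly_Mapping.keys m \<subseteq> {1..4})"

definition is_spinor :: "spinor \<Rightarrow> bool" where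
  "is_spinor s \<longleftrightarrow> (\<forall>k\<in>{1..4}. is_poly (s k))"

definition pzero :: poly where "pzero = (\<lambda>m. 0)"
definition pone :: poly where "pone = (\<lambda>m. if m = 0 then 1 else 0)"
definition var :: "nat \<Rightarrow> poly" where
  "var i = (\<lambda>m. if m = Poly_Mapping.single i 1 then 1 else 0)"

definition pmul :: "poly \<Rightarrow> poly \<Rightarrow> poly" where
  "pmul a b = (\<lambda>m. \<Sum>(p,q)\<in>{(p,q). p + q = m}. a p * b q)"

definition pderiv_z :: "nat \<Rightarrow> poly \<Rightarrow> poly" where
  "pderiv_z i a = (\<lambda>m. of_nat (Poly_Mapping.lookup m i + 1) * a (m + Poly_Mapping.single i 1))"

text \<open>Degrees of z^1..z^4: (2,0),(0,2),(-2,0),(0,-2); of e_1..e_4: (1,1),(-1,-1),(1,-1),(-1,1).\<close>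
definition dv :: "nat \<Rightarrow> int \<times> int" where
  "dv i = (if i = 1 then (2,0) else if i = 2 then (0,2) else if i = 3 then (-2,0)
           else if i = 4 then (0,-2) else (0,0))"

definition wv :: "nat \<Rightarrow> int \<times> int" where
  "wv k = (if k = 1 then (1,1) else if k = 2 then (-1,-1) else if k = 3 then (1,-1)
           else if k = 4 then (-1,1) else (0,0))"

definition mdeg :: "mon \<Rightarrow> int \<times> int" where
  "mdeg m = (\<Sum>i\<in>{1..4}. (int (Poly_Mapping.lookup m i) * fst (dv i), int (Poly_Mapping.lookup m i) * snd (dv i)))"

definition sigma :: "real \<Rightarrow> int \<times> int \<Rightarrow> int \<times> int \<Rightarrow> complex" where
  "sigma \<theta> n n' = exp (\<i> * complex_of_real (\<theta> / 4 * real_of_int (fst n * snd n' - snd n * fst n')))"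

definition pstar :: "real \<Rightarrow> poly \<Rightarrow> poly \<Rightarrow> poly" where
  "pstar \<theta> a b = (\<lambda>m. \<Sum>(p,q)\<in>{(p,q). p + q = m}. sigma \<theta> (mdeg p) (mdeg q) * a p * b q)"

text \<open>Left action a \<star> s and right action s \<star> a on spinors (the coefficient
 monomial p of component k has degree mdeg p + wv k).\<close>
definition lstar :: "real \<Rightarrow> poly \<Rightarrow> spinor \<Rightarrow> spinor" where
  "lstar \<theta> a s = (\<lambda>k m. \<Sum>(p,q)\<in>{(p,q). p + q = m}. sigma \<theta> (mdeg p) (mdeg q + wv k) * a p * s k q)"

definition rstar :: "real \<Rightarrow> spinor \<Rightarrow> poly \<Rightarrow> spinor" where
  "rstar \<theta> s a = (\<lambda>k m. \<Sum>(p,q)\<in>{(p,q). p + q = m}. sigma \<theta> (mdeg p + wv k) (mdeg q) * s k p * a q)"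

definition ebasis :: "nat \<Rightarrow> spinor" where
  "ebasis l = (\<lambda>k. if k = l then pone else pzero)"

text \<open>Left star-coordinates: s = sum_l (lcoord s l) \<star> e_l, and right
 star-coordinates: s = sum_l e_l \<star> (rcoord s l).\<close>
definition lcoord :: "real \<Rightarrow> spinor \<Rightarrow> nat \<Rightarrow> poly" where
  "lcoord \<theta> s l = (\<lambda>p. sigma \<theta> (wv l) (mdeg p) * s l p)"

definition rcoord :: "real \<Rightarrow> spinor \<Rightarrow> nat \<Rightarrow> poly" where
  "rcoord \<theta> s l = (\<lambda>p. sigma \<theta> (mdeg p) (wv l) * s l p)"

definition from_rcoord :: "real \<Rightarrow> (nat \<Rightarrow> poly) \<Rightarrow> spinor" where
  "from_rcoord \<theta> t = (\<lambda>k p. sigma \<theta> (wv k) (mdeg p) * t k p)"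

text \<open>partial^theta_i on A, determined by  d a = sum_i partial^theta_i a \<star> dz^i,
 i.e. (partial^theta_i a) \<star> dz^i = (partial_i a) dz^i for each i
 (dz^i has degree dv i).\<close>
definition pdth :: "real \<Rightarrow> nat \<Rightarrow> poly \<Rightarrow> poly" where
  "pdth \<theta> i a = (\<lambda>m. sigma \<theta> (dv i) (mdeg m + dv i) * pderiv_z i a m)"

text \<open>On spinors: with s = sum_l e_l \<star> t^l, the flat connection gives
 nabla s = sum_i (partial^theta_i s) \<otimes>_theta dz^i with
 partial^theta_i s = sum_l e_l \<star> partial^theta_i t^l.\<close>
definition sdth :: "real \<Rightarrow> nat \<Rightarrow> spinor \<Rightarrow> spinor" where
  "sdth \<theta> i s = from_rcoord \<theta> (\<lambda>l. pdth \<theta> i (rcoord \<theta> s l))"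

definition sderiv :: "nat \<Rightarrow> spinor \<Rightarrow> spinor" where
  "sderiv i s = (\<lambda>k. pderiv_z i (s k))"

definition gmet :: "nat \<Rightarrow> nat \<Rightarrow> complex" where
  "gmet i j = (if (i,j) \<in> {(1,3),(2,4),(3,1),(4,2)} then 1/2 else 0)"

definition ginv :: "nat \<Rightarrow> nat \<Rightarrow> complex" where
  "ginv i j = (if (i,j) \<in> {(1,3),(2,4),(3,1),(4,2)} then 2 else 0)"

definition zlow :: "nat \<Rightarrow> poly" where
  "zlow j = (\<lambda>m. \<Sum>k\<in>{1..4}. gmet j k * var k m)"

definition fsph :: "real \<Rightarrow> poly" where
  "fsph \<theta> = (\<lambda>m. (1/2) * ((\<Sum>i\<in>{1..4}. \<Sum>j\<in>{1..4}. gmet i j * pstar \<theta> (var i) (var j) m) - pone m))"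

definition mmul :: "cmat \<Rightarrow> cmat \<Rightarrow> cmat" where
  "mmul M N = (\<lambda>k l. \<Sum>r\<in>{1..4}. M k r * N r l)"

text \<open>Deformed gamma matrix: gamma_theta(dz^i \<otimes>_theta e_l) = sigma(deg dz^i, deg e_l) gamma(dz^i \<otimes> e_l).\<close>
definition gamma_th :: "real \<Rightarrow> (nat \<Rightarrow> cmat) \<Rightarrow> nat \<Rightarrow> cmat" where
  "gamma_th \<theta> \<gamma> i = (\<lambda>k l. sigma \<theta> (dv i) (wv l) * \<gamma> i k l)"

text \<open>Commutation matrix of R^4_theta:  z^j \<star> z^i = R^{ij} z^i \<star> z^j.\<close>
definition Rcomm :: "real \<Rightarrow> nat \<Rightarrow> nat \<Rightarrow> complex" where
  "Rcomm \<theta> i j = sigma \<theta> (dv j) (dv i) / sigma \<theta> (dv i) (dv j)"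

definition tbracket :: "real \<Rightarrow> (nat \<Rightarrow> cmat) \<Rightarrow> nat \<Rightarrow> nat \<Rightarrow> cmat" where
  "tbracket \<theta> \<gamma> j i = (\<lambda>k l. mmul (gamma_th \<theta> \<gamma> j) (gamma_th \<theta> \<gamma> i) k l
        - Rcomm \<theta> i j * mmul (gamma_th \<theta> \<gamma> i) (gamma_th \<theta> \<gamma> j) k l)"

text \<open>Action of a constant matrix on the deformed left module:
 M . (sum_l s^l \<star> e_l) = sum_k (sum_l M_kl s^l) \<star> e_k.\<close>
definition gact_th :: "real \<Rightarrow> cmat \<Rightarrow> spinor \<Rightarrow> spinor" where
  "gact_th \<theta> M s = (\<lambda>k m. \<Sum>k'\<in>{1..4}.
      lstar \<theta> (\<lambda>p. \<Sum>l\<in>{1..4}. M k' l * lcoord \<theta> s l p) (ebasis k') k m)"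

definition gact :: "cmat \<Rightarrow> spinor \<Rightarrow> spinor" where
  "gact M s = (\<lambda>k m. \<Sum>l\<in>{1..4}. M k l * s l m)"

definition spmul :: "spinor \<Rightarrow> poly \<Rightarrow> spinor" where
  "spmul s a = (\<lambda>k. pmul (s k) a)"

definition D_B :: "real \<Rightarrow> (nat \<Rightarrow> cmat) \<Rightarrow> spinor \<Rightarrow> spinor" where
  "D_B \<theta> \<gamma> s = (\<lambda>k m. - (1/2) * (\<Sum>i\<in>{1..4}. \<Sum>j\<in>{1..4}.
        gact_th \<theta> (tbracket \<theta> \<gamma> j i) (rstar \<theta> (sdth \<theta> i s) (zlow j)) k m)
      - (3/2) * s k m)"

definition D_CL :: "(nat \<Rightarrow> cmat) \<Rightarrow> spinor \<Rightarrow> spinor" where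
  "D_CL \<gamma> s = (\<lambda>k m. - (1/2) * (\<Sum>i\<in>{1..4}. \<Sum>j\<in>{1..4}.
        gact (\<lambda>a b. mmul (\<gamma> j) (\<gamma> i) a b - mmul (\<gamma> i) (\<gamma> j) a b)
             (spmul (sderiv i s) (zlow j)) k m)
      - (3/2) * s k m)"

text \<open>Undeformed gamma matrices of the flat spin structure on R^4 (w.r.t. e_1..e_4):
 Clifford relations gamma^i gamma^j + gamma^j gamma^i = 2 eps g^{ij} (either sign convention)
 and equivariance (Clifford multiplication is a comodule map).\<close>
definition gamma_ok :: "(nat \<Rightarrow> cmat) \<Rightarrow> bool" where
  "gamma_ok \<gamma> \<longleftrightarrow>
     (\<exists>\<epsilon>::complex. (\<epsilon> = 1 \<or> \<epsilon> = -1) \<and>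
        (\<forall>i\<in>{1..4}. \<forall>j\<in>{1..4}. \<forall>k\<in>{1..4}. \<forall>l\<in>{1..4}.
           mmul (\<gamma> i) (\<gamma> j) k l + mmul (\<gamma> j) (\<gamma> i) k l
             = 2 * \<epsilon> * ginv i j * (if k = l then 1 else 0))) \<and>
     (\<forall>i\<in>{1..4}. \<forall>k\<in>{1..4}. \<forall>l\<in>{1..4}. \<gamma> i k l \<noteq> 0 \<longrightarrow> wv k = wv l + dv i)"

end

theory Submission
  imports Defs
begin

text \<open>Every ingredient of the deformed operator differs from its classical counterpart
 only by a cocycle phase \<open>\<sigma>\<^sub>\<theta>\<close>, fixed by the torus degrees of the monomials and basis
 spinors involved. Since \<open>\<sigma>\<^sub>\<theta>\<close> is the exponential of a symplectic form, the phases
 of one bracket term of \<open>D\<^sub>B\<close> multiply to \<open>\<sigma>\<^sub>\<theta>(dv i + dv j, wv l)\<^sup>2\<close>. Equivariance of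
 the gamma matrices forces a nonzero entry \<open>(k, l)\<close> of \<open>\<gamma>\<^sup>j\<gamma>\<^sup>i\<close> to satisfy
 \<open>wv k = wv l + dv i + dv j\<close>; as the spinor weights are \<open>(\<plusminus>1, \<plusminus>1)\<close>, this forces
 \<open>dv i + dv j\<close> to be parallel to \<open>wv l\<close>, so that phase is 1. Hence \<open>D\<^sub>B\<close> and \<open>D\<^sub>C\<^sub>L\<close>
 agree already on representatives in \<open>E\<close>, not merely modulo \<open>f \<star> E\<close>.\<close>

lemma atLeastAtMost_one_four: "{1..4::nat} = {1, 2, 3, 4}"
  by auto

lemma finite_add_decompositions: "finite {(p, q). p + q = (m :: 'a \<Rightarrow>\<^sub>0 nat)}"
proof -
  let ?F = "{f. \<forall>x. (x \<in> Poly_Mapping.keys m \<longrightarrow> f x \<in> {..Max (Poly_Mapping.lookup m ` Poly_Mapping.keys m)})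
                   \<and> (x \<notin> Poly_Mapping.keys m \<longrightarrow> f x = 0)}"
  have "finite ?F"
    by (intro finite_set_of_finite_funs) simp_all
  then have fin: "finite {p. Poly_Mapping.lookup p \<in> ?F}"
    using finite_vimageI[of ?F Poly_Mapping.lookup] lookup_inject by (auto simp: inj_on_def vimage_def)
  have "{(p, q). p + q = m} \<subseteq> (\<lambda>p. (p, m - p)) ` {p. Poly_Mapping.lookup p \<in> ?F}"
  proof
    fix x assume "x \<in> {(p, q). p + q = m}"
    then obtain p q where x: "x = (p, q)" and m: "p + q = m"
      by blast
    have le_m: "Poly_Mapping.lookup p x \<le> Poly_Mapping.lookup m x" for x
      using m by (auto simp: lookup_add)
    have "Poly_Mapping.lookup p \<in> ?F"
    proof (clarsimp, intro conjI impI)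
      fix x
      show "Poly_Mapping.lookup p x = 0" if "x \<notin> Poly_Mapping.keys m"
        using le_m[of x] that by (simp add: in_keys_iff)
      show "Poly_Mapping.lookup p x \<le> Max (Poly_Mapping.lookup m ` Poly_Mapping.keys m)"
        if "x \<in> Poly_Mapping.keys m"
        using le_m[of x] that by (simp add: order_trans)
    qed
    moreover have "q = m - p"
      using m by auto
    ultimately show "x \<in> (\<lambda>p. (p, m - p)) ` {p. Poly_Mapping.lookup p \<in> ?F}"
      using x by blast
  qed
  then show ?thesis
    using fin by (rule finite_subset[OF _ finite_imageI])
qed

lemma mdeg_add: "mdeg (p + q) = mdeg p + mdeg q"
  unfolding mdeg_def by (simp add: lookup_add sum.distrib[symmetric] algebra_simps)

lemma mdeg_zero: "mdeg 0 = 0"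
  unfolding mdeg_def by (simp flip: zero_prod_def)

lemma mdeg_single: "i \<in> {1..4} \<Longrightarrow> mdeg (Poly_Mapping.single i 1) = dv i"
  unfolding mdeg_def atLeastAtMost_one_four by (auto simp: lookup_single dv_def)

definition det2 :: "int \<times> int \<Rightarrow> int \<times> int \<Rightarrow> int" where
  "det2 a b = fst a * snd b - snd a * fst b"

lemma sigma_exp_det2: "sigma \<theta> a b = exp ((\<i> * of_real (\<theta> / 4)) * of_int (det2 a b))"
  unfolding sigma_def det2_def by (simp add: mult.assoc)

text \<open>The six phases met by one summand of a bracket term of \<open>D\<^sub>B\<close>, with \<open>P\<close> the degree of
 the differentiated monomial, \<open>x = dv i\<close>, \<open>y = dv j\<close>, \<open>w = wv l\<close>; their exponents add up to
 \<open>2 det2 (x + y) w\<close>.\<close>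
lemma sigma_phase_cancel:
  assumes "det2 (x + y) w = 0"
  shows "sigma \<theta> (P - y) (w + x + y) * sigma \<theta> (x + y) w * sigma \<theta> y x * sigma \<theta> w (P - y)
       * sigma \<theta> (P + w) (- y) * sigma \<theta> x (P + w) = 1"
proof -
  have "det2 (P - y) (w + x + y) + det2 (x + y) w + det2 y x + det2 w (P - y)
      + det2 (P + w) (- y) + det2 x (P + w) = 2 * det2 (x + y) w"
    by (simp add: det2_def algebra_simps)
  with assms have "det2 (P - y) (w + x + y) + det2 (x + y) w + det2 y x + det2 w (P - y)
      + det2 (P + w) (- y) + det2 x (P + w) = 0"
    by simp
  then show ?thesis
    unfolding sigma_exp_det2 exp_add[symmetric] distrib_left[symmetric] of_int_add[symmetric]
    by simp
qed

lemma Rcomm_eq: "Rcomm \<theta> i j = sigma \<theta> (dv j) (dv i) * sigma \<theta> (dv j) (dv i)"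
  unfolding Rcomm_def sigma_exp_det2 exp_diff[symmetric] exp_add[symmetric]
  by (rule arg_cong[where f = exp]) (simp add: det2_def algebra_simps)

lemma lstar_ebasis:
  "lstar \<theta> a (ebasis k') k m = (if k = k' then sigma \<theta> (mdeg m) (wv k) * a m else 0)"
proof (cases "k = k'")
  case True
  have "lstar \<theta> a (ebasis k') k m
      = (\<Sum>x\<in>{(p, q). p + q = m}. if x = (m, 0) then sigma \<theta> (mdeg m) (wv k) * a m else 0)"
    unfolding lstar_def ebasis_def pone_def using True
    by (intro sum.cong) (auto simp: mdeg_zero split: if_splits)
  also have "\<dots> = sigma \<theta> (mdeg m) (wv k) * a m"
    using finite_add_decompositions[of m] by simp
  finally show ?thesis
    using True by simp
next
  case False
  then show ?thesis
    unfolding lstar_def ebasis_def pzero_def by simp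
qed

lemma gact_th_apply:
  "k \<in> {1..4} \<Longrightarrow> gact_th \<theta> M s k m
     = sigma \<theta> (mdeg m) (wv k) * (\<Sum>l\<in>{1..4}. M k l * (sigma \<theta> (wv l) (mdeg m) * s l m))"
  unfolding gact_th_def lstar_ebasis lcoord_def by (simp add: sum.delta)

lemma sdth_apply:
  assumes "i \<in> {1..4}"
  shows "sdth \<theta> i s l p = sigma \<theta> (dv i) (mdeg p + wv l) * pderiv_z i (s l) p"
proof -
  have "mdeg (p + Poly_Mapping.single i 1) = mdeg p + dv i"
    by (simp only: mdeg_add mdeg_single[OF assms])
  moreover have "sigma \<theta> (wv l) (mdeg p) * (sigma \<theta> (dv i) (mdeg p + dv i) * sigma \<theta> (mdeg p + dv i) (wv l))
      = sigma \<theta> (dv i) (mdeg p + wv l)"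
    unfolding sigma_exp_det2 exp_add[symmetric]
    by (rule arg_cong[where f = exp]) (simp add: det2_def algebra_simps)
  ultimately show ?thesis
    unfolding sdth_def from_rcoord_def pdth_def pderiv_z_def rcoord_def
    by (simp add: mult_ac)
qed

lemma mdeg_zlow:
  assumes "j \<in> {1..4}" and "zlow j q \<noteq> 0"
  shows "mdeg q = - dv j"
proof -
  obtain k where k: "k \<in> {1..4}" and "gmet j k * var k q \<noteq> 0"
    using assms(2) unfolding zlow_def by (meson sum.not_neutral_contains_not_neutral)
  then have "q = Poly_Mapping.single k 1" and "gmet j k \<noteq> 0"
    by (auto simp: var_def split: if_splits)
  moreover from \<open>gmet j k \<noteq> 0\<close> have "dv k = - dv j"
    unfolding gmet_def by (auto simp: dv_def split: if_splits)
  ultimately show ?thesis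
    using mdeg_single[OF k] by simp
qed

definition gamma_equivariant :: "(nat \<Rightarrow> cmat) \<Rightarrow> bool" where
  "gamma_equivariant \<gamma> \<longleftrightarrow>
     (\<forall>i\<in>{1..4}. \<forall>k\<in>{1..4}. \<forall>l\<in>{1..4}. \<gamma> i k l \<noteq> 0 \<longrightarrow> wv k = wv l + dv i)"

lemma gamma_ok_imp_equivariant: "gamma_ok \<gamma> \<Longrightarrow> gamma_equivariant \<gamma>"
  unfolding gamma_ok_def gamma_equivariant_def by blast

lemma mmul_gamma_th:
  assumes "gamma_equivariant \<gamma>" and "i \<in> {1..4}" and "l \<in> {1..4}"
  shows "mmul (gamma_th \<theta> \<gamma> j) (gamma_th \<theta> \<gamma> i) k l
     = sigma \<theta> (dv j) (wv l + dv i) * sigma \<theta> (dv i) (wv l) * mmul (\<gamma> j) (\<gamma> i) k l"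
  unfolding mmul_def gamma_th_def sum_distrib_left
proof (rule sum.cong[OF refl])
  fix r :: nat assume "r \<in> {1..4}"
  then have "\<gamma> i r l \<noteq> 0 \<Longrightarrow> wv r = wv l + dv i"
    using assms unfolding gamma_equivariant_def by blast
  then show "sigma \<theta> (dv j) (wv r) * \<gamma> j k r * (sigma \<theta> (dv i) (wv l) * \<gamma> i r l)
      = sigma \<theta> (dv j) (wv l + dv i) * sigma \<theta> (dv i) (wv l) * (\<gamma> j k r * \<gamma> i r l)"
    by (cases "\<gamma> i r l = 0") (simp_all add: mult_ac)
qed

lemma tbracket_eq:
  assumes "gamma_equivariant \<gamma>" and "i \<in> {1..4}" and "j \<in> {1..4}" and "l \<in> {1..4}"
  shows "tbracket \<theta> \<gamma> j i k l = sigma \<theta> (dv i + dv j) (wv l) * sigma \<theta> (dv j) (dv i)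
      * (mmul (\<gamma> j) (\<gamma> i) k l - mmul (\<gamma> i) (\<gamma> j) k l)"
proof -
  have "sigma \<theta> (dv j) (wv l + dv i) * sigma \<theta> (dv i) (wv l)
      = sigma \<theta> (dv i + dv j) (wv l) * sigma \<theta> (dv j) (dv i)"
    unfolding sigma_exp_det2 exp_add[symmetric]
    by (rule arg_cong[where f = exp]) (simp add: det2_def algebra_simps)
  moreover have "Rcomm \<theta> i j * (sigma \<theta> (dv i) (wv l + dv j) * sigma \<theta> (dv j) (wv l))
      = sigma \<theta> (dv i + dv j) (wv l) * sigma \<theta> (dv j) (dv i)"
    unfolding Rcomm_eq sigma_exp_det2 exp_add[symmetric]
    by (rule arg_cong[where f = exp]) (simp add: det2_def algebra_simps)
  ultimately show ?thesis
    unfolding tbracket_def mmul_gamma_th[OF assms(1,2,4)] mmul_gamma_th[OF assms(1,3,4)]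
    by (simp add: algebra_simps)
qed

lemma mmul_gamma_weight:
  assumes "gamma_equivariant \<gamma>" and "i \<in> {1..4}" and "j \<in> {1..4}" and "k \<in> {1..4}" and "l \<in> {1..4}"
    and "mmul (\<gamma> j) (\<gamma> i) k l \<noteq> 0"
  shows "wv k = wv l + dv i + dv j"
proof -
  obtain r where "r \<in> {1..4}" and "\<gamma> j k r * \<gamma> i r l \<noteq> 0"
    using assms(6) unfolding mmul_def by (meson sum.not_neutral_contains_not_neutral)
  then have "wv k = wv r + dv j" and "wv r = wv l + dv i"
    using assms(1-5) unfolding gamma_equivariant_def by auto
  then show ?thesis
    by simp
qed

text \<open>The spinor weights are \<open>(\<plusminus>1, \<plusminus>1)\<close>, and a sum of two coordinate degrees has
 coordinate sum divisible by 4; so \<open>wv k = \<plusminus>wv l\<close>.\<close>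
lemma det2_weight_shift:
  assumes "i \<in> {1..4}" and "j \<in> {1..4}" and "k \<in> {1..4}" and "l \<in> {1..4}"
    and "wv k = wv l + dv i + dv j"
  shows "det2 (dv i + dv j) (wv l) = 0"
proof -
  let ?W = "{(1, 1), (-1, -1), (1, -1), (-1, 1)} :: (int \<times> int) set"
  let ?D = "{(2, 0), (0, 2), (-2, 0), (0, -2)} :: (int \<times> int) set"
  have "\<forall>a\<in>?W. \<forall>b\<in>?W. \<forall>c\<in>?D. \<forall>d\<in>?D. a = b + c + d \<longrightarrow> det2 (c + d) b = 0"
    by (simp add: det2_def)
  moreover have "wv k \<in> ?W" "wv l \<in> ?W" "dv i \<in> ?D" "dv j \<in> ?D"
    using assms(1-4) unfolding atLeastAtMost_one_four wv_def dv_def by auto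
  ultimately show ?thesis
    using assms(5) by blast
qed

lemma rstar_sdth_zlow:
  assumes i: "i \<in> {1..4}" and j: "j \<in> {1..4}" and "det2 (dv i + dv j) (wv l) = 0"
  shows "sigma \<theta> (mdeg m) (wv l + dv i + dv j) * sigma \<theta> (dv i + dv j) (wv l) * sigma \<theta> (dv j) (dv i)
      * sigma \<theta> (wv l) (mdeg m) * rstar \<theta> (sdth \<theta> i s) (zlow j) l m
    = spmul (sderiv i s) (zlow j) l m"
proof -
  let ?Phi = "sigma \<theta> (mdeg m) (wv l + dv i + dv j) * sigma \<theta> (dv i + dv j) (wv l)
      * sigma \<theta> (dv j) (dv i) * sigma \<theta> (wv l) (mdeg m)"
  have "?Phi * (sigma \<theta> (mdeg p + wv l) (mdeg q) * (sigma \<theta> (dv i) (mdeg p + wv l) * pderiv_z i (s l) p)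
        * zlow j q)
      = pderiv_z i (s l) p * zlow j q" if "p + q = m" for p q
  proof (cases "zlow j q = 0")
    case False
    then have "mdeg q = - dv j" and "mdeg m = mdeg p - dv j"
      using mdeg_zlow[OF j] that by (auto simp: mdeg_add)
    with sigma_phase_cancel[OF assms(3), of \<theta> "mdeg p"]
    have "?Phi * (sigma \<theta> (mdeg p + wv l) (mdeg q) * sigma \<theta> (dv i) (mdeg p + wv l)) = 1"
      by (simp add: mult_ac)
    then show ?thesis
      by (simp add: mult_ac)
  qed simp
  then show ?thesis
    unfolding rstar_def sdth_apply[OF i] spmul_def pmul_def sderiv_def sum_distrib_left
    by (auto intro: sum.cong)
qed

lemma gact_th_tbracket_eq:
  assumes eqv: "gamma_equivariant \<gamma>" and i: "i \<in> {1..4}" and j: "j \<in> {1..4}" and k: "k \<in> {1..4}"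
  shows "gact_th \<theta> (tbracket \<theta> \<gamma> j i) (rstar \<theta> (sdth \<theta> i s) (zlow j)) k m
     = gact (\<lambda>a b. mmul (\<gamma> j) (\<gamma> i) a b - mmul (\<gamma> i) (\<gamma> j) a b) (spmul (sderiv i s) (zlow j)) k m"
  unfolding gact_th_apply[OF k] gact_def sum_distrib_left
proof (rule sum.cong[OF refl])
  fix l :: nat assume l: "l \<in> {1..4}"
  let ?C = "mmul (\<gamma> j) (\<gamma> i) k l - mmul (\<gamma> i) (\<gamma> j) k l"
  show "sigma \<theta> (mdeg m) (wv k)
      * (tbracket \<theta> \<gamma> j i k l * (sigma \<theta> (wv l) (mdeg m) * rstar \<theta> (sdth \<theta> i s) (zlow j) l m))
    = ?C * spmul (sderiv i s) (zlow j) l m"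
  proof (cases "?C = 0")
    case True
    then show ?thesis
      by (simp add: tbracket_eq[OF eqv i j l])
  next
    case False
    then have "wv k = wv l + dv i + dv j"
      using mmul_gamma_weight[OF eqv i j k l] mmul_gamma_weight[OF eqv j i k l]
      by (cases "mmul (\<gamma> j) (\<gamma> i) k l = 0") (auto simp: add_ac)
    with rstar_sdth_zlow[OF i j det2_weight_shift[OF i j k l]] show ?thesis
      by (simp add: tbracket_eq[OF eqv i j l] mult_ac)
  qed
qed

lemma D_B_eq_D_CL:
  fixes k :: nat
  assumes "gamma_equivariant \<gamma>" and "k \<in> {1..4}"
  shows "D_B \<theta> \<gamma> s k m = D_CL \<gamma> s k m"
  unfolding D_B_def D_CL_def using gact_th_tbracket_eq[OF assms(1) _ _ assms(2)] by simp

theorem proposition4p12: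
  fixes \<theta> :: real and \<gamma> :: "nat \<Rightarrow> cmat"
  assumes "gamma_ok \<gamma>"
  shows "\<forall>s. is_spinor s \<longrightarrow>
           (\<exists>t. is_spinor t \<and>
              (\<forall>k\<in>{1..4}. \<forall>m. D_B \<theta> \<gamma> s k m - D_CL \<gamma> s k m = lstar \<theta> (fsph \<theta>) t k m))"
proof (intro allI impI)
  fix s :: spinor
  have "D_B \<theta> \<gamma> s k m - D_CL \<gamma> s k m = lstar \<theta> (fsph \<theta>) (\<lambda>_. pzero) k m"
    if "k \<in> {1..4}" for k m
  proof -
    have "lstar \<theta> (fsph \<theta>) (\<lambda>_. pzero) k m = 0"
      unfolding lstar_def pzero_def by simp
    then show ?thesis
      using D_B_eq_D_CL[OF gamma_ok_imp_equivariant[OF assms] that] by simp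
  qed
  moreover have "is_spinor (\<lambda>_. pzero)"
    unfolding is_spinor_def is_poly_def pzero_def by simp
  ultimately show "\<exists>t. is_spinor t \<and>
      (\<forall>k\<in>{1..4}. \<forall>m. D_B \<theta> \<gamma> s k m - D_CL \<gamma> s k m = lstar \<theta> (fsph \<theta>) t k m)"
    by blast
qed

end
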